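(* Let $\mu=(p,q,r,s)\in\mathbb{C}^4$, $\phi\in\Phi_\mu$, and $X\in\Omega_1$ with $x=\phi(X)$. The boundary of $X$ is a bi-infinite path of edges alternating $X\cap Y_n$, $X\cap Z_n$ ($n\in\mathbb{Z}$), with $Y_n\in\Omega_2$, $Z_n\in\Omega_3$, indexed so that $y_{n+1}=q-xz_n-y_n$ and $z_{n+1}=r-xy_{n+1}-z_n$ for all $n$, where $y_n=\phi(Y_n)$, $z_n=\phi(Z_n)$. For $x\neq\pm2$ put $\mathfrak y=\frac{2q-xr}{4-x^2}$, $\mathfrak z=\frac{2r-xq}{4-x^2}$, and say that $x$ is degenerate if $(px+s-x^2)(4-x^2)+q^2+r^2-qrx=0$. Then: (1) if $x\in(-2,2)$, then $|y_n|$ and $|z_n|$ remain bounded; (2) if $x=\pm2$, then $|y_n|$ and $|z_n|$ grow at most quadratically in $n$; (3) if $x\notin[-2,2]$ and $x$ is not degenerate, then $|y_n|$ and $|z_n|$ grow exponentially as $n\to+\infty$ and as $n\to-\infty$; (4) if $x\notin[-2,2]$ and $x$ is degenerate, then exactly one of the following holds: $y_n\to\mathfrak y$, $z_n\to\mathfrak z$ as $n\to-\infty$ and $|y_n|,|z_n|$ grow exponentially as $n\to+\infty$; or $y_n\to\mathfrak y$, $z_n\to\mathfrak z$ as $n\to+\infty$ and $|y_n|,|z_n|$ grow exponentially as $n\to-\infty$; or $y_n=\mathfrak y$ and $z_n=\mathfrak z$ for all $n\in\mathbb{Z}$.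
   Context: Let $\Sigma$ be a countably infinite simplicial tree, properly embedded in the plane, all of whose vertices have degree $3$. A complementary region is the closure of a connected component of the complement of $\Sigma$; $\Omega$ is the set of complementary regions, $E(\Sigma)$ the set of edges. Every edge $e$ is the intersection of exactly two regions $X,Y$, and its two endpoints lie on two further regions $Z,W$ respectively; write $e\leftrightarrow(X,Y;Z,W)$. Three regions meet at each vertex. Fix a coloring $\mathcal C:\Omega\cup E(\Sigma)\to\{1,2,3\}$ such that for every $e\leftrightarrow(X,Y;Z,W)$, $\mathcal C(e)=\mathcal C(Z)=\mathcal C(W)$ and $\mathcal C(e),\mathcal C(X),\mathcal C(Y)$ are pairwise distinct; $\Omega_i$, $E_i$ denote regions/edges of color $i$. For $\mu=(p,q,r,s)\in\mathbb{C}^4$, a $\mu$-Markoff map is $\phi:\Omega\to\mathbb{C}$ such that (i) at every vertex with regions $X\in\Omega_1,Y\in\Omega_2,Z\in\Omega_3$, $x^2+y^2+z^2+xyz=px+qy+rz+s$ where $x=\phi(X)$, etc.; (ii) for $e\in E_1$, $e\leftrightarrow(Y,Z;X,X')$: $\phi(X)+\phi(X')=p-\phi(Y)\phi(Z)$; for $e\in E_2$, $e\leftrightarrow(X,Z;Y,Y')$: $\phi(Y)+\phi(Y')=q-\phi(X)\phi(Z)$; for $e\in E_3$, $e\leftrightarrow(X,Y;Z,Z')$: $\phi(Z)+\phi(Z')=r-\phi(X)\phi(Y)$. $\Phi_\mu$ is the set of such maps. (The degeneracy condition on $x$ is the condition $AB=0$ of the paper, where $y_n=A\Lambda^{2n}+B\Lambda^{-2n}+\mathfrak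 y$ with $\Lambda=(x+\sqrt{x^2-4})/2$.) *)

theory Defs
  imports Complex_Main
begin

text \<open>Boundary data of a region X of colour 1 for a mu-Markoff map:
  y n = phi(Y_n), z n = phi(Z_n), the boundary of X being the bi-infinite path
  of edges X\<inter>Y_n, X\<inter>Z_n, X\<inter>Y_(n+1), ...  The vertices on the boundary of X
  are (X,Y_n,Z_n) and (X,Y_(n+1),Z_n); the edges X\<inter>Z_n (colour 2) and
  X\<inter>Y_(n+1) (colour 3) give the edge relations.\<close>
definition boundary_seq ::
  "complex \<Rightarrow> complex \<Rightarrow> complex \<Rightarrow> complex \<Rightarrow> complex \<Rightarrow> (int \<Rightarrow> complex) \<Rightarrow> (int \<Rightarrow> complex) \<Rightarrow> bool"
  where
  "boundary_seq p q r s x y z \<longleftrightarrow>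
     (\<forall>n. x\<^sup>2 + (y n)\<^sup>2 + (z n)\<^sup>2 + x * y n * z n = p * x + q * y n + r * z n + s) \<and>
     (\<forall>n. x\<^sup>2 + (y (n+1))\<^sup>2 + (z n)\<^sup>2 + x * y (n+1) * z n = p * x + q * y (n+1) + r * z n + s) \<and>
     (\<forall>n. y (n+1) = q - x * z n - y n) \<and>
     (\<forall>n. z (n+1) = r - x * y (n+1) - z n)"

definition degenerate :: "complex \<Rightarrow> complex \<Rightarrow> complex \<Rightarrow> complex \<Rightarrow> complex \<Rightarrow> bool" where
  "degenerate p q r s x \<longleftrightarrow>
     (p * x + s - x\<^sup>2) * (4 - x\<^sup>2) + q\<^sup>2 + r\<^sup>2 - q * r * x = 0"

definition exp_growth_top :: "(int \<Rightarrow> complex) \<Rightarrow> bool" where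
  "exp_growth_top f \<longleftrightarrow>
     (\<exists>c>0. \<exists>L>(1::real). \<forall>\<^sub>F n in at_top. c * L ^ nat n \<le> cmod (f n))"

definition exp_growth_bot :: "(int \<Rightarrow> complex) \<Rightarrow> bool" where
  "exp_growth_bot f \<longleftrightarrow>
     (\<exists>c>0. \<exists>L>(1::real). \<forall>\<^sub>F n in at_bot. c * L ^ nat (- n) \<le> cmod (f n))"

end

theory Submission
  imports Defs
begin

text \<open>Put Y n = y n - yy and Z n = z n - zz. The edge relations become the linear recursion
  Y (n+1) = -x Z n - Y n, Z (n+1) = -x Y (n+1) - Z n, which preserves the quadratic form
  Y^2 + Z^2 + x Y Z; by the vertex relation this form times 4 - x^2 is the degeneracy discriminant.
  For real x in (-2, 2) the form is positive definite, so the orbit is bounded. For x = \<plusminus>2 the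
  sequences have constant second differences, hence grow at most quadratically. Otherwise let
  \<alpha>, \<beta> = 1/\<alpha> be the roots of t^2 + x t + 1 with |\<alpha>| > 1: the combinations Z n - \<alpha> Y n and
  Z n - \<beta> Y n are geometric with ratios \<beta>^2 and \<alpha>^2, and their product at n = 0 is the invariant
  form. So x is degenerate exactly when one of them vanishes, which removes the exponential growth
  in one direction and leaves convergence to (yy, zz) there.\<close>

lemma eventually_pow_nat_gt_at_top:
  fixes L K :: real
  assumes "L > 1"
  shows "\<forall>\<^sub>F n :: int in at_top. K < L ^ nat n"
proof -
  obtain N where N: "K < L ^ N"
    using real_arch_pow[OF assms] by blast
  have "\<forall>\<^sub>F n :: int in at_top. int N \<le> n"
    by (rule eventually_ge_at_top)
  then show ?thesis
  proof (rule eventually_mono)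
    fix n :: int
    assume "int N \<le> n"
    then have "L ^ N \<le> L ^ nat n"
      using assms by (intro power_increasing) auto
    with N show "K < L ^ nat n" by simp
  qed
qed

lemma exp_growth_topI:
  fixes f :: "int \<Rightarrow> complex"
  assumes "A > 0" and L: "L > 1"
    and bound: "\<forall>\<^sub>F n in at_top. A * L ^ nat n - B \<le> cmod (f n)"
  shows "exp_growth_top f"
proof -
  have "\<forall>\<^sub>F n in at_top. 2 * B / A < L ^ nat n"
    using L by (rule eventually_pow_nat_gt_at_top)
  with bound have "\<forall>\<^sub>F n in at_top. A / 2 * L ^ nat n \<le> cmod (f n)"
    by eventually_elim (use \<open>A > 0\<close> in \<open>auto simp: field_simps\<close>)
  then show ?thesis
    unfolding exp_growth_top_def using \<open>A > 0\<close> L by (intro exI[of _ "A / 2"]) auto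
qed

lemma exp_growth_top_not_tendsto:
  assumes "exp_growth_top f"
  shows "\<not> (f \<longlongrightarrow> l) at_top"
proof
  assume lim: "(f \<longlongrightarrow> l) at_top"
  obtain c L where "c > 0" "L > 1" and grow: "\<forall>\<^sub>F n in at_top. c * L ^ nat n \<le> cmod (f n)"
    using assms unfolding exp_growth_top_def by blast
  have "\<forall>\<^sub>F n in at_top. dist (f n) l < 1"
    using lim by (rule tendstoD) simp
  moreover have "\<forall>\<^sub>F n in at_top. (cmod l + 1) / c < L ^ nat n"
    using \<open>L > 1\<close> by (rule eventually_pow_nat_gt_at_top)
  moreover note grow
  ultimately have "\<forall>\<^sub>F n :: int in at_top. False"
  proof eventually_elim
    case (elim n)
    have "cmod (f n) < cmod l + 1"
      using elim(1) norm_triangle_ineq2[of "f n" l] by (simp add: dist_norm)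
    moreover have "cmod l + 1 < c * L ^ nat n"
      using elim(2) \<open>c > 0\<close> by (simp add: field_simps)
    ultimately show False using elim(3) by simp
  qed
  then show False by simp
qed

lemma exp_growth_bot_iff_mirror: "exp_growth_bot f \<longleftrightarrow> exp_growth_top (\<lambda>n. f (- n))"
  unfolding exp_growth_bot_def exp_growth_top_def at_bot_mirror eventually_filtermap by simp

lemma tendsto_at_bot_iff_mirror:
  fixes f :: "int \<Rightarrow> 'a::topological_space"
  shows "(f \<longlongrightarrow> l) at_bot \<longleftrightarrow> ((\<lambda>n. f (- n)) \<longlongrightarrow> l) at_top"
  unfolding filterlim_def at_bot_mirror filtermap_filtermap ..

lemma exp_growth_bot_not_tendsto:
  assumes "exp_growth_bot f"
  shows "\<not> (f \<longlongrightarrow> l) at_bot"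
  using assms exp_growth_top_not_tendsto
  unfolding exp_growth_bot_iff_mirror tendsto_at_bot_iff_mirror by blast

lemma exp_growth_top_two_root_seq:
  fixes f :: "int \<Rightarrow> complex"
  assumes f: "\<forall>n. f n = l + c * u powi n + d * v powi n"
    and u: "cmod u < 1" and v: "cmod v > 1" and d: "d \<noteq> 0"
  shows "exp_growth_top f"
proof (rule exp_growth_topI)
  show "\<forall>\<^sub>F n in at_top. cmod d * cmod v ^ nat n - (cmod l + cmod c) \<le> cmod (f n)"
    using eventually_ge_at_top[of 0]
  proof eventually_elim
    case (elim n)
    have "cmod (c * u ^ nat n) \<le> cmod c"
      using u by (simp add: norm_mult norm_power mult_left_le power_le_one)
    moreover have "cmod (d * v ^ nat n) = cmod d * cmod v ^ nat n"
      by (simp add: norm_mult norm_power)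
    moreover have "f n = l + c * u ^ nat n + d * v ^ nat n"
      using f elim by (simp flip: power_int_of_nat)
    then have "cmod (d * v ^ nat n) \<le> cmod (f n) + cmod l + cmod (c * u ^ nat n)"
      using norm_triangle_ineq4[of "f n" "l + c * u ^ nat n"]
        norm_triangle_ineq[of l "c * u ^ nat n"] by simp
    ultimately show ?case by linarith
  qed
qed (use d v in auto)

lemma tendsto_const_plus_geometric:
  fixes f :: "int \<Rightarrow> complex"
  assumes f: "\<forall>n. f n = l + c * u powi n" and u: "cmod u < 1"
  shows "(f \<longlongrightarrow> l) at_top"
proof -
  have "((\<lambda>n. l + c * u ^ nat n) \<longlongrightarrow> l + c * 0) at_top"
    by (intro tendsto_intros filterlim_compose[OF LIMSEQ_power_zero filterlim_nat_sequentially] u)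
  moreover have "\<forall>\<^sub>F n in at_top. l + c * u ^ nat n = f n"
    using eventually_ge_at_top[of 0] by eventually_elim (use f in \<open>auto simp flip: power_int_of_nat\<close>)
  ultimately show ?thesis by (simp add: tendsto_cong)
qed

lemma two_root_seq_asymptotics:
  fixes f :: "int \<Rightarrow> complex"
  assumes f: "\<forall>n. f n = l + c * u powi n + d * v powi n"
    and u: "cmod u < 1" "u \<noteq> 0" and v: "cmod v > 1"
  shows "(d \<noteq> 0 \<longrightarrow> exp_growth_top f) \<and> (d = 0 \<longrightarrow> (f \<longlongrightarrow> l) at_top)
       \<and> (c \<noteq> 0 \<longrightarrow> exp_growth_bot f) \<and> (c = 0 \<longrightarrow> (f \<longlongrightarrow> l) at_bot)"
proof (intro conjI impI)
  have mirror: "\<forall>n. f (- n) = l + d * (inverse v) powi n + c * (inverse u) powi n"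
    using f by (simp add: power_int_minus power_int_inverse)
  have "cmod (inverse v) < 1" "cmod (inverse u) > 1"
    using u v by (simp_all add: norm_inverse inverse_less_1_iff one_less_inverse_iff)
  show "exp_growth_top f" if "d \<noteq> 0"
    using exp_growth_top_two_root_seq[OF f u(1) v that] .
  show "(f \<longlongrightarrow> l) at_top" if "d = 0"
    using tendsto_const_plus_geometric[of f l c u] f u that by simp
  show "exp_growth_bot f" if "c \<noteq> 0"
    unfolding exp_growth_bot_iff_mirror
    using exp_growth_top_two_root_seq[OF mirror] \<open>cmod (inverse v) < 1\<close> \<open>cmod (inverse u) > 1\<close> that
    by blast
  show "(f \<longlongrightarrow> l) at_bot" if "c = 0"
    unfolding tendsto_at_bot_iff_mirror
    using tendsto_const_plus_geometric[of "\<lambda>n. f (- n)" l d "inverse v"] mirror \<open>cmod (inverse v) < 1\<close> that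
    by simp
qed

lemma two_root_pair_asymptotics:
  fixes y z :: "int \<Rightarrow> complex"
  assumes y: "\<forall>n. y n = ly + a * cy * u powi n + b * dy * v powi n"
    and z: "\<forall>n. z n = lz + a * cz * u powi n + b * dz * v powi n"
    and u: "cmod u < 1" "u \<noteq> 0" and v: "cmod v > 1"
    and coeffs: "cy \<noteq> 0" "dy \<noteq> 0" "cz \<noteq> 0" "dz \<noteq> 0"
  shows "a \<noteq> 0 \<Longrightarrow> b \<noteq> 0 \<Longrightarrow>
           exp_growth_top y \<and> exp_growth_top z \<and> exp_growth_bot y \<and> exp_growth_bot z"
    and "a = 0 \<or> b = 0 \<Longrightarrow>
         (let A = ((y \<longlongrightarrow> ly) at_bot \<and> (z \<longlongrightarrow> lz) at_bot \<and>
                  exp_growth_top y \<and> exp_growth_top z);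
             B = ((y \<longlongrightarrow> ly) at_top \<and> (z \<longlongrightarrow> lz) at_top \<and>
                  exp_growth_bot y \<and> exp_growth_bot z);
             C = (\<forall>n. y n = ly \<and> z n = lz)
         in (A \<and> \<not> B \<and> \<not> C) \<or> (\<not> A \<and> B \<and> \<not> C) \<or> (\<not> A \<and> \<not> B \<and> C))"
proof -
  note asy = two_root_seq_asymptotics[OF y u v] two_root_seq_asymptotics[OF z u v]
  have const_tendsto: "(y \<longlongrightarrow> ly) at_top \<and> (y \<longlongrightarrow> ly) at_bot" if "\<forall>n. y n = ly \<and> z n = lz"
  proof -
    from that have "y = (\<lambda>_. ly)" by auto
    then show ?thesis by simp
  qed
  show "exp_growth_top y \<and> exp_growth_top z \<and> exp_growth_bot y \<and> exp_growth_bot z"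
    if "a \<noteq> 0" "b \<noteq> 0"
    using asy that coeffs by simp
  assume "a = 0 \<or> b = 0"
  then consider "a = 0" "b \<noteq> 0" | "a \<noteq> 0" "b = 0" | "a = 0" "b = 0"
    by blast
  then show "let A = ((y \<longlongrightarrow> ly) at_bot \<and> (z \<longlongrightarrow> lz) at_bot \<and> exp_growth_top y \<and> exp_growth_top z);
      B = ((y \<longlongrightarrow> ly) at_top \<and> (z \<longlongrightarrow> lz) at_top \<and> exp_growth_bot y \<and> exp_growth_bot z);
      C = (\<forall>n. y n = ly \<and> z n = lz)
    in (A \<and> \<not> B \<and> \<not> C) \<or> (\<not> A \<and> B \<and> \<not> C) \<or> (\<not> A \<and> \<not> B \<and> C)"
  proof cases
    case 1
    then have "exp_growth_top y"
      using asy coeffs by simp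
    then show ?thesis
      unfolding Let_def using 1 asy coeffs const_tendsto exp_growth_top_not_tendsto by (simp; blast)
  next
    case 2
    then have "exp_growth_bot y"
      using asy coeffs by simp
    then show ?thesis
      unfolding Let_def using 2 asy coeffs const_tendsto exp_growth_bot_not_tendsto by (simp; blast)
  next
    case 3
    then have "\<forall>n. y n = ly \<and> z n = lz"
      using y z by simp
    then show ?thesis
      unfolding Let_def using const_tendsto exp_growth_top_not_tendsto exp_growth_bot_not_tendsto by blast
  qed
qed

lemma geometric_seq_int:
  fixes a :: "int \<Rightarrow> 'a::field"
  assumes step: "\<forall>n. a (n + 1) = k * a n" and "k \<noteq> 0"
  shows "a n = k powi n * a 0"
proof (induction n rule: int_induct[where k = 0])
  case base
  then show ?case by simp
next
  case (step1 i)
  then show ?case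
    using step \<open>k \<noteq> 0\<close> by (simp add: power_int_add_1')
next
  case (step2 i)
  have "a i = k * a (i - 1)"
    using step[rule_format, of "i - 1"] by simp
  with step2 \<open>k \<noteq> 0\<close> show ?case
    by (simp add: power_int_diff field_simps)
qed

lemma reciprocal_roots_norm_gt_1:
  fixes x :: complex
  assumes x: "x \<notin> complex_of_real ` {-2..2}"
  obtains \<alpha> \<beta> where "\<alpha> + \<beta> = -x" "\<alpha> * \<beta> = 1" "cmod \<alpha> > 1"
proof -
  define w where "w = csqrt (x\<^sup>2 - 4)"
  define a where "a = (-x + w) / 2"
  define b where "b = (-x - w) / 2"
  have sum: "a + b = -x"
    unfolding a_def b_def by (simp add: field_simps)
  have prod: "a * b = 1"
  proof -
    have "w\<^sup>2 = x\<^sup>2 - 4"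
      unfolding w_def by simp
    then show ?thesis
      unfolding a_def b_def by (simp add: field_simps power2_eq_square)
  qed
  then have norms: "cmod a * cmod b = 1"
    by (metis norm_mult norm_one)
  have "cmod b > 1" if "cmod a < 1"
  proof (rule ccontr)
    assume "\<not> cmod b > 1"
    then have "cmod a * cmod b \<le> cmod a"
      by (intro mult_left_le) auto
    with that norms show False by simp
  qed
  then consider "cmod a > 1" | "cmod b > 1" | "cmod a = 1"
    by fastforce
  then show thesis
  proof cases
    case 1
    with sum prod show thesis by (rule that)
  next
    case 2
    with sum prod show thesis by (intro that[of b a]) (simp_all add: ac_simps)
  next
    case 3
    text \<open>A root on the unit circle forces the other root to be its conjugate, so x = -2 Re a is real in [-2, 2].\<close>
    have "a * cnj a = a * b"
      using 3 prod complex_norm_square[of a] by simp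
    moreover have "a \<noteq> 0"
      using prod by auto
    ultimately have "b = cnj a"
      by simp
    then have "x = complex_of_real (- 2 * Re a)"
      using sum complex_add_cnj[of a] by (metis minus_minus mult_minus_left of_real_minus)
    moreover have "\<bar>Re a\<bar> \<le> 1"
      using abs_Re_le_cmod[of a] 3 by simp
    ultimately have "x \<in> complex_of_real ` {-2..2}"
      by (intro image_eqI[of _ _ "- 2 * Re a"]) auto
    with x show thesis
      by blast
  qed
qed

lemma eigen_combination_step:
  fixes Y Z :: "int \<Rightarrow> complex"
  assumes "\<forall>n. Y (n + 1) = - x * Z n - Y n" and "\<forall>n. Z (n + 1) = - x * Y (n + 1) - Z n"
    and "\<alpha> + \<beta> = - x" and "\<alpha> * \<beta> = 1"
  shows "Z (n + 1) - \<alpha> * Y (n + 1) = \<beta>\<^sup>2 * (Z n - \<alpha> * Y n)"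
proof -
  have "Y (n + 1) = - x * Z n - Y n" "Z (n + 1) = - x * Y (n + 1) - Z n"
    using assms(1,2) by blast+
  with assms(3,4) show ?thesis by algebra
qed

lemma homogeneous_solution_hyperbolic:
  fixes Y Z :: "int \<Rightarrow> complex"
  assumes hY: "\<forall>n. Y (n + 1) = - x * Z n - Y n" and hZ: "\<forall>n. Z (n + 1) = - x * Y (n + 1) - Z n"
    and sum: "\<alpha> + \<beta> = - x" and prod: "\<alpha> * \<beta> = 1" and "\<alpha> \<noteq> \<beta>"
  defines "a \<equiv> Z 0 - \<alpha> * Y 0" and "b \<equiv> Z 0 - \<beta> * Y 0"
  shows "Y n = (a * (\<beta>\<^sup>2) powi n - b * (\<alpha>\<^sup>2) powi n) / (\<beta> - \<alpha>)"
    and "Z n = (\<beta> * a * (\<beta>\<^sup>2) powi n - \<alpha> * b * (\<alpha>\<^sup>2) powi n) / (\<beta> - \<alpha>)"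
proof -
  have "\<alpha> \<noteq> 0" "\<beta> \<noteq> 0"
    using prod by auto
  have "Z n - \<alpha> * Y n = (\<beta>\<^sup>2) powi n * a"
    unfolding a_def using eigen_combination_step[OF hY hZ sum prod] \<open>\<beta> \<noteq> 0\<close>
    by (intro geometric_seq_int[where a = "\<lambda>n. Z n - \<alpha> * Y n"]) auto
  moreover have "Z n - \<beta> * Y n = (\<alpha>\<^sup>2) powi n * b"
    unfolding b_def using eigen_combination_step[OF hY hZ _ _] sum prod \<open>\<alpha> \<noteq> 0\<close>
    by (intro geometric_seq_int[where a = "\<lambda>n. Z n - \<beta> * Y n"]) (auto simp: ac_simps)
  moreover have "\<beta> - \<alpha> \<noteq> 0"
    using \<open>\<alpha> \<noteq> \<beta>\<close> by simp
  ultimately show "Y n = (a * (\<beta>\<^sup>2) powi n - b * (\<alpha>\<^sup>2) powi n) / (\<beta> - \<alpha>)"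
    and "Z n = (\<beta> * a * (\<beta>\<^sup>2) powi n - \<alpha> * b * (\<alpha>\<^sup>2) powi n) / (\<beta> - \<alpha>)"
    by (simp_all add: field_simps) algebra+
qed

lemma abs_le_1_plus_square: "\<bar>t :: real\<bar> \<le> 1 + t\<^sup>2"
proof (cases "\<bar>t\<bar> \<le> 1")
  case False
  then have "\<bar>t\<bar> * 1 \<le> \<bar>t\<bar> * \<bar>t\<bar>"
    by (intro mult_left_mono) auto
  then show ?thesis
    by (simp add: power2_eq_square)
qed (simp add: add_increasing2)

lemma bounded_homogeneous_solution_elliptic:
  fixes u v :: "int \<Rightarrow> real"
  assumes x: "\<bar>x\<bar> < 2"
    and hu: "\<forall>n. u (n + 1) = - x * v n - u n" and hv: "\<forall>n. v (n + 1) = - x * u (n + 1) - v n"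
  shows "\<exists>B. \<forall>n. \<bar>u n\<bar> \<le> B \<and> \<bar>v n\<bar> \<le> B"
proof -
  define J where "J n = (u n)\<^sup>2 + x * u n * v n + (v n)\<^sup>2" for n
  text \<open>The form is invariant under each of the two half-steps of the recursion.\<close>
  have "J (n + 1) = J n" for n
  proof -
    have "J (n + 1) = (u (n + 1))\<^sup>2 + x * u (n + 1) * v n + (v n)\<^sup>2"
      unfolding J_def hv[rule_format] by (simp add: power2_eq_square algebra_simps)
    also have "\<dots> = J n"
      unfolding J_def hu[rule_format] by (simp add: power2_eq_square algebra_simps)
    finally show ?thesis .
  qed
  then have J_const: "J n = J 0" for n
    using geometric_seq_int[of J 1 n] by simp
  define e where "e = 1 - \<bar>x\<bar> / 2"
  have "e > 0"
    unfolding e_def using x by simp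
  text \<open>Positive definiteness for |x| < 2, via |x u v| \<le> |x| (u^2 + v^2) / 2.\<close>
  have "e * ((u n)\<^sup>2 + (v n)\<^sup>2) \<le> J n" for n
  proof -
    have "\<bar>x\<bar> * (2 * \<bar>u n\<bar> * \<bar>v n\<bar>) \<le> \<bar>x\<bar> * ((u n)\<^sup>2 + (v n)\<^sup>2)"
      using sum_squares_bound[of "\<bar>u n\<bar>" "\<bar>v n\<bar>"] by (simp add: mult_left_mono)
    moreover have "- (x * u n * v n) \<le> \<bar>x\<bar> * \<bar>u n\<bar> * \<bar>v n\<bar>"
      by (metis abs_ge_minus_self abs_mult)
    ultimately show ?thesis
      unfolding e_def J_def by (simp add: algebra_simps)
  qed
  then have "e * ((u n)\<^sup>2 + (v n)\<^sup>2) \<le> J 0" for n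
    using J_const by metis
  then have squares: "(u n)\<^sup>2 + (v n)\<^sup>2 \<le> J 0 / e" for n
    using \<open>e > 0\<close> by (simp add: field_simps)
  have "\<bar>u n\<bar> \<le> 1 + J 0 / e \<and> \<bar>v n\<bar> \<le> 1 + J 0 / e" for n
    using squares[of n] abs_le_1_plus_square[of "u n"] abs_le_1_plus_square[of "v n"]
      zero_le_power2[of "u n"] zero_le_power2[of "v n"] by linarith
  then show ?thesis
    by blast
qed

lemma constant_second_difference_closed_form:
  fixes w :: "int \<Rightarrow> 'a::field_char_0"
  assumes rec: "\<forall>n. w (n + 1) + w (n - 1) = 2 * w n + c"
  shows "2 * w n = 2 * w 0 + 2 * of_int n * (w 1 - w 0) + c * of_int (n * (n - 1))"
proof -
  define G where "G n = 2 * w 0 + 2 * of_int n * (w 1 - w 0) + c * of_int (n * (n - 1))" for n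
  have "2 * w n = G n \<and> 2 * w (n + 1) = G (n + 1)"
  proof (induction n rule: int_induct[where k = 0])
    case base
    then show ?case unfolding G_def by simp
  next
    case (step1 i)
    have "w (i + 1 + 1) + w i = 2 * w (i + 1) + c"
      using rec[rule_format, of "i + 1"] by (simp only: add_diff_cancel_right')
    then have "2 * w (i + 1 + 1) = 2 * (2 * w (i + 1)) + 2 * c - 2 * w i"
      by algebra
    also have "\<dots> = 2 * G (i + 1) + 2 * c - G i"
      using step1 by simp
    also have "\<dots> = G (i + 1 + 1)"
      unfolding G_def by (simp add: algebra_simps)
    finally show ?case
      using step1 by simp
  next
    case (step2 i)
    have "w (i + 1) + w (i - 1) = 2 * w i + c"
      using rec by blast
    then have "2 * w (i - 1) = 2 * (2 * w i) + 2 * c - 2 * w (i + 1)"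
      by algebra
    also have "\<dots> = 2 * G i + 2 * c - G (i + 1)"
      using step2 by simp
    also have "\<dots> = G (i - 1)"
      unfolding G_def by (simp add: algebra_simps)
    finally show ?case
      using step2 by simp
  qed
  then show ?thesis
    unfolding G_def by blast
qed

lemma quadratic_bound_constant_second_difference:
  fixes w :: "int \<Rightarrow> 'a::{real_normed_field, field_char_0}"
  assumes "\<forall>n. w (n + 1) + w (n - 1) = 2 * w n + c"
  shows "\<exists>C. \<forall>n. norm (w n) \<le> C * (1 + (real_of_int n)\<^sup>2)"
proof -
  define C where "C = norm (w 0) + norm (w 1 - w 0) + norm c"
  have "norm (w n) \<le> C * (1 + (real_of_int n)\<^sup>2)" for n
  proof -
    define t where "t = real_of_int n"
    have lin: "\<bar>t\<bar> \<le> 1 + t\<^sup>2"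
      by (rule abs_le_1_plus_square)
    have quad: "\<bar>real_of_int (n * (n - 1))\<bar> / 2 \<le> 1 + t\<^sup>2"
    proof -
      have "\<bar>real_of_int (n * (n - 1))\<bar> = \<bar>t\<bar> * \<bar>t - 1\<bar>"
        unfolding t_def by (simp add: abs_mult)
      also have "\<dots> \<le> \<bar>t\<bar> * (\<bar>t\<bar> + 1)"
        by (intro mult_left_mono) auto
      also have "\<dots> = t\<^sup>2 + \<bar>t\<bar>"
        by (simp add: algebra_simps power2_eq_square abs_mult_self_eq)
      finally show ?thesis
        using lin by simp
    qed
    have "w n = w 0 + of_int n * (w 1 - w 0) + c * of_int (n * (n - 1)) / 2"
      using constant_second_difference_closed_form[OF assms, of n] by (simp add: field_simps)
    then have "norm (w n) \<le> norm (w 0) + norm (of_int n * (w 1 - w 0)) + norm (c * of_int (n * (n - 1)) / 2)"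
      using norm_triangle_ineq[of "w 0 + of_int n * (w 1 - w 0)" "c * of_int (n * (n - 1)) / 2"]
        norm_triangle_ineq[of "w 0" "of_int n * (w 1 - w 0)"] by simp
    also have "\<dots> = norm (w 0) + \<bar>t\<bar> * norm (w 1 - w 0) + norm c * (\<bar>real_of_int (n * (n - 1))\<bar> / 2)"
      unfolding t_def by (simp add: norm_mult norm_divide norm_of_int del: of_int_mult of_int_diff)
    also have "\<dots> \<le> norm (w 0) * (1 + t\<^sup>2) + (1 + t\<^sup>2) * norm (w 1 - w 0) + norm c * (1 + t\<^sup>2)"
      using mult_left_mono[of 1 "1 + t\<^sup>2" "norm (w 0)"]
      by (intro add_mono mult_right_mono mult_left_mono lin quad) simp_all
    also have "\<dots> = C * (1 + t\<^sup>2)"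
      unfolding C_def by (simp add: algebra_simps)
    finally show ?thesis
      unfolding t_def .
  qed
  then show ?thesis
    by blast
qed

lemma boundary_seq_centred:
  assumes bd: "boundary_seq p q r s x y z" and d: "4 - x\<^sup>2 \<noteq> 0"
  defines "yy \<equiv> (2 * q - x * r) / (4 - x\<^sup>2)" and "zz \<equiv> (2 * r - x * q) / (4 - x\<^sup>2)"
  shows "\<forall>n. y (n + 1) - yy = - x * (z n - zz) - (y n - yy)"
    and "\<forall>n. z (n + 1) - zz = - x * (y (n + 1) - yy) - (z n - zz)"
    and "((y 0 - yy)\<^sup>2 + (z 0 - zz)\<^sup>2 + x * (y 0 - yy) * (z 0 - zz)) * (4 - x\<^sup>2)
           = (p * x + s - x\<^sup>2) * (4 - x\<^sup>2) + q\<^sup>2 + r\<^sup>2 - q * r * x"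
proof -
  have yrec: "\<forall>n. y (n + 1) = q - x * z n - y n" and zrec: "\<forall>n. z (n + 1) = r - x * y (n + 1) - z n"
    and vertex: "x\<^sup>2 + (y 0)\<^sup>2 + (z 0)\<^sup>2 + x * y 0 * z 0 = p * x + q * y 0 + r * z 0 + s"
    using bd unfolding boundary_seq_def by blast+
  have yy: "yy * (4 - x\<^sup>2) = 2 * q - x * r" and zz: "zz * (4 - x\<^sup>2) = 2 * r - x * q"
    unfolding yy_def zz_def using d by simp_all
  text \<open>(yy, zz) is the fixed point of the affine recursion.\<close>
  have "(2 * yy + x * zz - q) * (4 - x\<^sup>2) = 0" "(2 * zz + x * yy - r) * (4 - x\<^sup>2) = 0"
    using yy zz by algebra+
  then have q: "q = 2 * yy + x * zz" and r: "r = 2 * zz + x * yy"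
    using d by simp_all
  show "\<forall>n. y (n + 1) - yy = - x * (z n - zz) - (y n - yy)"
    using yrec q by (simp add: algebra_simps)
  show "\<forall>n. z (n + 1) - zz = - x * (y (n + 1) - yy) - (z n - zz)"
    using zrec r by (simp add: algebra_simps)
  have "(yy\<^sup>2 + zz\<^sup>2 + x * yy * zz) * (4 - x\<^sup>2) * (4 - x\<^sup>2) = (q\<^sup>2 + r\<^sup>2 - q * r * x) * (4 - x\<^sup>2)"
    using yy zz by algebra
  then have "(yy\<^sup>2 + zz\<^sup>2 + x * yy * zz) * (4 - x\<^sup>2) = q\<^sup>2 + r\<^sup>2 - q * r * x"
    using d by simp
  with vertex q r show "((y 0 - yy)\<^sup>2 + (z 0 - zz)\<^sup>2 + x * (y 0 - yy) * (z 0 - zz)) * (4 - x\<^sup>2)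
      = (p * x + s - x\<^sup>2) * (4 - x\<^sup>2) + q\<^sup>2 + r\<^sup>2 - q * r * x"
    by algebra
qed

lemma boundary_seq_bounded_elliptic:
  assumes bd: "boundary_seq p q r s x y z" and "x \<in> complex_of_real ` {-2<..<2}"
  shows "\<exists>B. \<forall>n. cmod (y n) \<le> B \<and> cmod (z n) \<le> B"
proof -
  obtain t where x: "x = complex_of_real t" "\<bar>t\<bar> < 2"
    using assms(2) by auto
  define yy where "yy = (2 * q - x * r) / (4 - x\<^sup>2)"
  define zz where "zz = (2 * r - x * q) / (4 - x\<^sup>2)"
  define Y where "Y n = y n - yy" for n
  define Z where "Z n = z n - zz" for n
  have "t\<^sup>2 < 4"
    using x(2) power_strict_mono[of "\<bar>t\<bar>" 2 2] by simp
  then have "4 - x\<^sup>2 \<noteq> 0"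
    unfolding x(1) by (metis of_real_numeral of_real_power right_minus_eq of_real_eq_iff less_irrefl)
  from boundary_seq_centred[OF bd this, folded yy_def zz_def Y_def Z_def]
  have hY: "\<forall>n. Y (n + 1) = - x * Z n - Y n" and hZ: "\<forall>n. Z (n + 1) = - x * Y (n + 1) - Z n"
    by blast+
  text \<open>As x is real, the real and imaginary parts of Y, Z solve the same real recursion.\<close>
  obtain B1 where B1: "\<forall>n. \<bar>Re (Y n)\<bar> \<le> B1 \<and> \<bar>Re (Z n)\<bar> \<le> B1"
    using bounded_homogeneous_solution_elliptic[of t "\<lambda>n. Re (Y n)" "\<lambda>n. Re (Z n)"] x hY hZ
    by auto
  obtain B2 where B2: "\<forall>n. \<bar>Im (Y n)\<bar> \<le> B2 \<and> \<bar>Im (Z n)\<bar> \<le> B2"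
    using bounded_homogeneous_solution_elliptic[of t "\<lambda>n. Im (Y n)" "\<lambda>n. Im (Z n)"] x hY hZ
    by auto
  have "cmod (y n) \<le> cmod yy + cmod zz + B1 + B2 \<and> cmod (z n) \<le> cmod yy + cmod zz + B1 + B2" for n
  proof -
    have "cmod (y n) \<le> cmod yy + cmod (Y n)" "cmod (z n) \<le> cmod zz + cmod (Z n)"
      unfolding Y_def Z_def by (metis add.commute diff_add_cancel norm_triangle_ineq)+
    moreover have "cmod (Y n) \<le> \<bar>Re (Y n)\<bar> + \<bar>Im (Y n)\<bar>" "cmod (Z n) \<le> \<bar>Re (Z n)\<bar> + \<bar>Im (Z n)\<bar>"
      by (rule cmod_le)+
    ultimately show ?thesis
      using B1[rule_format, of n] B2[rule_format, of n] norm_ge_zero[of yy] norm_ge_zero[of zz]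
      by linarith
  qed
  then show ?thesis
    by blast
qed

lemma boundary_seq_second_difference:
  assumes bd: "boundary_seq p q r s x y z" and x: "x\<^sup>2 = 4"
  shows "y (n + 1) + y (n - 1) = 2 * y n + (2 * q - x * r)"
    and "z (n + 1) + z (n - 1) = 2 * z n + (2 * r - x * q)"
proof -
  have yrec: "\<forall>n. y (n + 1) = q - x * z n - y n" and zrec: "\<forall>n. z (n + 1) = r - x * y (n + 1) - z n"
    using bd unfolding boundary_seq_def by blast+
  have eqs: "y (n + 1) = q - x * z n - y n" "z (n + 1) = r - x * y (n + 1) - z n"
    "y n = q - x * z (n - 1) - y (n - 1)" "z n = r - x * y n - z (n - 1)"
    using yrec[rule_format, of n] zrec[rule_format, of n]
      yrec[rule_format, of "n - 1"] zrec[rule_format, of "n - 1"] by simp_all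
  have y_prev: "y (n - 1) = q - x * z (n - 1) - y n" and z_prev: "z (n - 1) = r - x * y n - z n"
    using eqs by (simp_all add: algebra_simps)
  have "y (n + 1) + y (n - 1) = 2 * y n + (2 * q - x * r) + (x\<^sup>2 - 4) * y n"
    unfolding eqs(1) y_prev z_prev by (simp add: algebra_simps power2_eq_square)
  with x show "y (n + 1) + y (n - 1) = 2 * y n + (2 * q - x * r)"
    by simp
  have "z (n + 1) + z (n - 1) = 2 * z n + (2 * r - x * q) + (x\<^sup>2 - 4) * z n"
    unfolding eqs(2) eqs(1) z_prev by (simp add: algebra_simps power2_eq_square)
  with x show "z (n + 1) + z (n - 1) = 2 * z n + (2 * r - x * q)"
    by simp
qed

lemma boundary_seq_quadratic_parabolic:
  assumes bd: "boundary_seq p q r s x y z" and "x = 2 \<or> x = -2"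
  shows "\<exists>C. \<forall>n. cmod (y n) \<le> C * (1 + (real_of_int n)\<^sup>2) \<and> cmod (z n) \<le> C * (1 + (real_of_int n)\<^sup>2)"
proof -
  have "x\<^sup>2 = 4"
    using assms(2) by auto
  note second_difference = boundary_seq_second_difference[OF bd this]
  obtain Cy where Cy: "\<forall>n. cmod (y n) \<le> Cy * (1 + (real_of_int n)\<^sup>2)"
    using quadratic_bound_constant_second_difference[of y] second_difference(1) by blast
  obtain Cz where Cz: "\<forall>n. cmod (z n) \<le> Cz * (1 + (real_of_int n)\<^sup>2)"
    using quadratic_bound_constant_second_difference[of z] second_difference(2) by blast
  have "cmod (y n) \<le> max Cy Cz * (1 + (real_of_int n)\<^sup>2) \<and> cmod (z n) \<le> max Cy Cz * (1 + (real_of_int n)\<^sup>2)" for n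
  proof -
    have "Cy * (1 + (real_of_int n)\<^sup>2) \<le> max Cy Cz * (1 + (real_of_int n)\<^sup>2)"
      and "Cz * (1 + (real_of_int n)\<^sup>2) \<le> max Cy Cz * (1 + (real_of_int n)\<^sup>2)"
      by (simp_all add: mult_right_mono add_nonneg_nonneg)
    with Cy Cz show ?thesis
      by (meson order_trans)
  qed
  then show ?thesis
    by blast
qed

lemma boundary_seq_hyperbolic:
  assumes bd: "boundary_seq p q r s x y z" and x: "x \<notin> complex_of_real ` {-2..2}"
  defines "yy \<equiv> (2 * q - x * r) / (4 - x\<^sup>2)" and "zz \<equiv> (2 * r - x * q) / (4 - x\<^sup>2)"
  obtains u v a b cy dy cz dz where "cmod u < 1" "u \<noteq> 0" "cmod v > 1"
    and "cy \<noteq> 0" "dy \<noteq> 0" "cz \<noteq> 0" "dz \<noteq> 0"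
    and "\<forall>n. y n = yy + a * cy * u powi n + b * dy * v powi n"
    and "\<forall>n. z n = zz + a * cz * u powi n + b * dz * v powi n"
    and "degenerate p q r s x \<longleftrightarrow> a = 0 \<or> b = 0"
proof -
  have "4 - x\<^sup>2 \<noteq> 0"
  proof
    assume "4 - x\<^sup>2 = 0"
    then have "(x - 2) * (x + 2) = 0"
      by algebra
    then have "x = 2 \<or> x = -2"
      by (simp add: eq_neg_iff_add_eq_0)
    with x show False
      by (auto intro: image_eqI[of _ _ 2] image_eqI[of _ _ "-2"])
  qed
  define Y where "Y n = y n - yy" for n
  define Z where "Z n = z n - zz" for n
  note centred = boundary_seq_centred[OF bd \<open>4 - x\<^sup>2 \<noteq> 0\<close>, folded yy_def zz_def Y_def Z_def]
  obtain \<alpha> \<beta> where sum: "\<alpha> + \<beta> = - x" and prod: "\<alpha> * \<beta> = 1" and "cmod \<alpha> > 1"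
    using reciprocal_roots_norm_gt_1[OF x] by blast
  have "cmod \<beta> < 1"
    using prod \<open>cmod \<alpha> > 1\<close> by (metis norm_mult norm_one norm_ge_zero not_less
        mult_le_cancel_left1 order.strict_trans)
  have "\<alpha> \<noteq> 0" "\<beta> \<noteq> 0" "\<alpha> \<noteq> \<beta>"
    using prod \<open>cmod \<alpha> > 1\<close> \<open>cmod \<beta> < 1\<close> by auto
  define a where "a = Z 0 - \<alpha> * Y 0"
  define b where "b = Z 0 - \<beta> * Y 0"
  note sol = homogeneous_solution_hyperbolic[OF centred(1,2) sum prod \<open>\<alpha> \<noteq> \<beta>\<close>, folded a_def b_def]
  show thesis
  proof (rule that[of "\<beta>\<^sup>2" "\<alpha>\<^sup>2" "1 / (\<beta> - \<alpha>)" "- 1 / (\<beta> - \<alpha>)" "\<beta> / (\<beta> - \<alpha>)" "- \<alpha> / (\<beta> - \<alpha>)" a b])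
    show "cmod (\<beta>\<^sup>2) < 1" "cmod (\<alpha>\<^sup>2) > 1"
      using \<open>cmod \<alpha> > 1\<close> \<open>cmod \<beta> < 1\<close> by (simp_all add: norm_power power_less_one_iff one_less_power)
    have "Y n = a * (1 / (\<beta> - \<alpha>)) * (\<beta>\<^sup>2) powi n + b * (- 1 / (\<beta> - \<alpha>)) * (\<alpha>\<^sup>2) powi n"
      and "Z n = a * (\<beta> / (\<beta> - \<alpha>)) * (\<beta>\<^sup>2) powi n + b * (- \<alpha> / (\<beta> - \<alpha>)) * (\<alpha>\<^sup>2) powi n" for n
      unfolding sol by (simp_all add: diff_divide_distrib mult_ac)
    moreover have "y n = yy + Y n" "z n = zz + Z n" for n
      unfolding Y_def Z_def by simp_all
    ultimately show "\<forall>n. y n = yy + a * (1 / (\<beta> - \<alpha>)) * (\<beta>\<^sup>2) powi n + b * (- 1 / (\<beta> - \<alpha>)) * (\<alpha>\<^sup>2) powi n"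
      "\<forall>n. z n = zz + a * (\<beta> / (\<beta> - \<alpha>)) * (\<beta>\<^sup>2) powi n + b * (- \<alpha> / (\<beta> - \<alpha>)) * (\<alpha>\<^sup>2) powi n"
      by simp_all
    text \<open>The product a b is the invariant quadratic form of (Y 0, Z 0), which determines degeneracy.\<close>
    have "a * b = (Y 0)\<^sup>2 + (Z 0)\<^sup>2 + x * Y 0 * Z 0"
      unfolding a_def b_def using sum prod by algebra
    with centred(3) \<open>4 - x\<^sup>2 \<noteq> 0\<close> show "degenerate p q r s x \<longleftrightarrow> a = 0 \<or> b = 0"
      unfolding degenerate_def Y_def Z_def by (metis mult_eq_0_iff)
  qed (use \<open>\<alpha> \<noteq> 0\<close> \<open>\<beta> \<noteq> 0\<close> \<open>\<alpha> \<noteq> \<beta>\<close> in auto)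
qed

lemma boundary_seq_exp_growth_nondegenerate:
  assumes bd: "boundary_seq p q r s x y z"
    and "x \<notin> complex_of_real ` {-2..2}" and "\<not> degenerate p q r s x"
  shows "exp_growth_top y" "exp_growth_top z" "exp_growth_bot y" "exp_growth_bot z"
proof -
  obtain u v a b cy dy cz dz where u: "cmod u < 1" "u \<noteq> 0" and v: "cmod v > 1"
    and coeffs: "cy \<noteq> 0" "dy \<noteq> 0" "cz \<noteq> 0" "dz \<noteq> 0"
    and y: "\<forall>n. y n = (2 * q - x * r) / (4 - x\<^sup>2) + a * cy * u powi n + b * dy * v powi n"
    and z: "\<forall>n. z n = (2 * r - x * q) / (4 - x\<^sup>2) + a * cz * u powi n + b * dz * v powi n"
    and degenerate: "degenerate p q r s x \<longleftrightarrow> a = 0 \<or> b = 0"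
    by (rule boundary_seq_hyperbolic[OF bd assms(2)])
  from degenerate assms(3) have "a \<noteq> 0" "b \<noteq> 0"
    by simp_all
  with two_root_pair_asymptotics(1)[OF y z u v coeffs]
  show "exp_growth_top y" "exp_growth_top z" "exp_growth_bot y" "exp_growth_bot z"
    by simp_all
qed

lemma boundary_seq_trichotomy_degenerate:
  assumes bd: "boundary_seq p q r s x y z"
    and "x \<notin> complex_of_real ` {-2..2}" and "degenerate p q r s x"
  defines "yy \<equiv> (2 * q - x * r) / (4 - x\<^sup>2)" and "zz \<equiv> (2 * r - x * q) / (4 - x\<^sup>2)"
  shows "let A = ((y \<longlongrightarrow> yy) at_bot \<and> (z \<longlongrightarrow> zz) at_bot \<and> exp_growth_top y \<and> exp_growth_top z);
             B = ((y \<longlongrightarrow> yy) at_top \<and> (z \<longlongrightarrow> zz) at_top \<and> exp_growth_bot y \<and> exp_growth_bot z);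
             C = (\<forall>n. y n = yy \<and> z n = zz)
         in (A \<and> \<not> B \<and> \<not> C) \<or> (\<not> A \<and> B \<and> \<not> C) \<or> (\<not> A \<and> \<not> B \<and> C)"
proof -
  obtain u v a b cy dy cz dz where u: "cmod u < 1" "u \<noteq> 0" and v: "cmod v > 1"
    and coeffs: "cy \<noteq> 0" "dy \<noteq> 0" "cz \<noteq> 0" "dz \<noteq> 0"
    and y: "\<forall>n. y n = yy + a * cy * u powi n + b * dy * v powi n"
    and z: "\<forall>n. z n = zz + a * cz * u powi n + b * dz * v powi n"
    and degenerate: "degenerate p q r s x \<longleftrightarrow> a = 0 \<or> b = 0"
    by (rule boundary_seq_hyperbolic[OF bd assms(2), folded yy_def zz_def])
  from degenerate assms(3) have "a = 0 \<or> b = 0"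
    by simp
  then show ?thesis
    by (rule two_root_pair_asymptotics(2)[OF y z u v coeffs])
qed

theorem lemma3p8:
  fixes p q r s x :: complex and y z :: "int \<Rightarrow> complex"
  assumes bd: "boundary_seq p q r s x y z"
  defines "yy \<equiv> (2 * q - x * r) / (4 - x\<^sup>2)"
      and "zz \<equiv> (2 * r - x * q) / (4 - x\<^sup>2)"
  shows
    "(x \<in> complex_of_real ` {-2<..<2} \<longrightarrow>
        (\<exists>B. \<forall>n. cmod (y n) \<le> B \<and> cmod (z n) \<le> B))
   \<and> ((x = 2 \<or> x = -2) \<longrightarrow>
        (\<exists>C. \<forall>n. cmod (y n) \<le> C * (1 + (real_of_int n)\<^sup>2) \<and>
                  cmod (z n) \<le> C * (1 + (real_of_int n)\<^sup>2)))
   \<and> ((x \<notin> complex_of_real ` {-2..2} \<and> \<not> degenerate p q r s x) \<longrightarrow>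
        (exp_growth_top y \<and> exp_growth_top z \<and> exp_growth_bot y \<and> exp_growth_bot z))
   \<and> ((x \<notin> complex_of_real ` {-2..2} \<and> degenerate p q r s x) \<longrightarrow>
        (let A = ((y \<longlongrightarrow> yy) at_bot \<and> (z \<longlongrightarrow> zz) at_bot \<and>
                  exp_growth_top y \<and> exp_growth_top z);
             B = ((y \<longlongrightarrow> yy) at_top \<and> (z \<longlongrightarrow> zz) at_top \<and>
                  exp_growth_bot y \<and> exp_growth_bot z);
             C = (\<forall>n. y n = yy \<and> z n = zz)
         in (A \<and> \<not> B \<and> \<not> C) \<or> (\<not> A \<and> B \<and> \<not> C) \<or> (\<not> A \<and> \<not> B \<and> C)))"
proof -
  note regimes = boundary_seq_bounded_elliptic[OF bd] boundary_seq_quadratic_parabolic[OF bd]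
    boundary_seq_exp_growth_nondegenerate[OF bd] boundary_seq_trichotomy_degenerate[OF bd, folded yy_def zz_def]
  show ?thesis
    by (intro conjI impI; (elim conjE)?; rule regimes; assumption)
qed

end
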